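(* Let $A$ be a normed PI-algebra over $F\in\{\mathbb{R},\mathbb{C}\}$. If its completion $C(A)$ is nil, then $A$ is nilpotent.
   Context: All algebras are non-unitary associative over $F$. A normed algebra has a norm with $\|ab\|\le\|a\|\|b\|$; $C(A)$ is its completion as a Banach algebra. $A$ is a PI-algebra if it satisfies a nonzero polynomial identity, i.e. there is a nonzero $f(x_1,\dots,x_m)$ in the free non-unitary associative algebra $F\langle x_1,x_2,\dots\rangle$ with $f(a_1,\dots,a_m)=0$ for all $a_i\in A$. An algebra is nil if every element is nilpotent, and nilpotent if there is $n$ with $a_1a_2\cdots a_n=0$ for all $a_1,\dots,a_n$ in it. *)

theory Defs
  imports "HOL-Analysis.Analysis"
begin

fun mprod :: "(nat \<Rightarrow> 'a::times) \<Rightarrow> nat list \<Rightarrow> 'a" where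
  "mprod a [] = undefined"
| "mprod a [i] = a i"
| "mprod a (i # j # js) = a i * mprod a (j # js)"

text \<open>Elements of the free non-unitary associative algebra F<x1,x2,...>:
  finitely supported coefficient functions on nonempty words (the empty word
  has coefficient 0).\<close>
definition free_poly :: "(nat list \<Rightarrow> 'k::zero) \<Rightarrow> bool" where
  "free_poly f \<longleftrightarrow> finite {w. f w \<noteq> 0} \<and> f [] = 0"

definition poly_eval :: "('k \<Rightarrow> 'a \<Rightarrow> 'a) \<Rightarrow> (nat list \<Rightarrow> 'k::zero) \<Rightarrow> (nat \<Rightarrow> 'a::{times,comm_monoid_add}) \<Rightarrow> 'a" where
  "poly_eval sc f a = (\<Sum>w\<in>{w. f w \<noteq> 0}. sc (f w) (mprod a w))"

definition is_PI :: "('k::zero \<Rightarrow> 'a \<Rightarrow> 'a) \<Rightarrow> 'a::{times,comm_monoid_add} set \<Rightarrow> bool" where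
  "is_PI sc A \<longleftrightarrow> (\<exists>f :: nat list \<Rightarrow> 'k. free_poly f \<and> (\<exists>w. f w \<noteq> 0) \<and>
      (\<forall>a. (\<forall>i. a i \<in> A) \<longrightarrow> poly_eval sc f a = 0))"

definition subalg :: "('k \<Rightarrow> 'a \<Rightarrow> 'a) \<Rightarrow> 'a::{times,comm_monoid_add} set \<Rightarrow> bool" where
  "subalg sc A \<longleftrightarrow> 0 \<in> A \<and> (\<forall>x\<in>A. \<forall>y\<in>A. x + y \<in> A \<and> x * y \<in> A) \<and>
      (\<forall>c. \<forall>x\<in>A. sc c x \<in> A)"

text \<open>A complex structure on a real normed algebra making it a complex normed algebra.\<close>
definition complex_scale :: "(complex \<Rightarrow> 'a::real_normed_algebra \<Rightarrow> 'a) \<Rightarrow> bool" where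
  "complex_scale sc \<longleftrightarrow>
     (\<forall>c x y. sc c (x + y) = sc c x + sc c y) \<and>
     (\<forall>c d x. sc (c + d) x = sc c x + sc d x) \<and>
     (\<forall>c d x. sc (c * d) x = sc c (sc d x)) \<and>
     (\<forall>r x. sc (complex_of_real r) x = scaleR r x) \<and>
     (\<forall>c x. norm (sc c x) = cmod c * norm x) \<and>
     (\<forall>c x y. sc c (x * y) = sc c x * y \<and> sc c (x * y) = x * sc c y)"

definition nil_alg :: "'a::{times,zero} set \<Rightarrow> bool" where
  "nil_alg B \<longleftrightarrow> (\<forall>x\<in>B. \<exists>n\<ge>1. mprod (\<lambda>_. x) (replicate n 0) = 0)"

definition nilpotent_alg :: "'a::{times,zero} set \<Rightarrow> bool" where
  "nilpotent_alg A \<longleftrightarrow> (\<exists>n\<ge>1. \<forall>a. (\<forall>i. a i \<in> A) \<longrightarrow> mprod a [0..<n] = 0)"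

end

theory Submission
  imports Defs
begin

text \<open>By Baire's theorem one of the closed sets \<open>{x. x^(k+1) = 0}\<close> has interior, and
expanding \<open>(x\<^sub>0 + t y)^(k+1)\<close> as a polynomial in \<open>t\<close> shows \<open>y^(k+1) = 0\<close> for all \<open>y\<close>; so the
nil index is bounded. Over a field of characteristic 0, nil of bounded index implies nilpotent
(Nagata--Higman), proved relative to an ideal \<open>J\<close>: if \<open>x^(M+1) \<in> J\<close> for all \<open>x\<close>, linearisation
gives \<open>x^M z y^M \<in> J\<close>, hence the ideal \<open>I\<close> generated by \<open>J\<close> and all \<open>M\<close>-th powers satisfies
\<open>I a I \<subseteq> J\<close>, and induction on \<open>M\<close> puts all products of \<open>2^(M+1) - 1\<close> factors into \<open>J\<close>.\<close>

fun word_prod :: "'a::times list \<Rightarrow> 'a" where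
  "word_prod [] = undefined"
| "word_prod [a] = a"
| "word_prod (a # b # l) = a * word_prod (b # l)"

lemma mprod_eq_word_prod: "mprod a w = word_prod (map a w)"
  by (induction a w rule: mprod.induct) auto

lemma word_prod_Cons: "l \<noteq> [] \<Longrightarrow> word_prod (a # l) = a * word_prod l"
  by (cases l) auto

lemma word_prod_append:
  fixes xs :: "'a::semigroup_mult list"
  assumes "xs \<noteq> []" "ys \<noteq> []"
  shows "word_prod (xs @ ys) = word_prod xs * word_prod ys"
  using assms(1)
proof (induction xs rule: list_nonempty_induct)
  case (single x)
  show ?case using assms(2) by (simp add: word_prod_Cons)
next
  case (cons x xs)
  then show ?case using assms(2) by (simp add: word_prod_Cons mult.assoc)
qed

lemma word_prod_flatten:
  fixes us :: "'a::semigroup_mult list"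
  assumes "ws \<noteq> []"
  shows "word_prod (us @ ws @ vs) = word_prod (us @ [word_prod ws] @ vs)"
  using assms
  by (cases "us = []"; cases "vs = []") (simp_all add: word_prod_append word_prod_Cons)

lemma coeffs_in_subspace:
  fixes c :: "nat \<Rightarrow> 'a::real_vector"
  assumes J: "subspace J"
    and "d > 0" "\<And>t. 0 < t \<Longrightarrow> t < d \<Longrightarrow> (\<Sum>k\<le>N. t^k *\<^sub>R c k) \<in> J" "k \<le> N"
  shows "c k \<in> J"
  using assms(2-)
proof (induction N arbitrary: c d k)
  case 0
  then show ?case using "0.prems"(2)[of "d/2"] by simp
next
  case (Suc N)
  define p where "p t = (\<Sum>k\<le>Suc N. t^k *\<^sub>R c k)" for t
  \<comment> \<open>\<open>p (2 t) - 2^(N+1) p t\<close> has degree \<open>N\<close>, with coefficients nonzero multiples of \<open>c 0, \<dots>, c N\<close>.\<close>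
  have lower: "c k \<in> J" if "k \<le> N" for k
  proof -
    have "(\<Sum>k\<le>N. t^k *\<^sub>R ((2^k - 2^Suc N) *\<^sub>R c k)) \<in> J" if "0 < t" "t < d/2" for t :: real
    proof -
      have "(\<Sum>k\<le>N. t^k *\<^sub>R ((2^k - 2^Suc N) *\<^sub>R c k)) = p (2*t) - 2^Suc N *\<^sub>R p t"
        by (simp add: p_def scaleR_sum_right sum_subtractf power_mult_distrib algebra_simps)
      then show ?thesis
        using Suc.prems(2)[of t] Suc.prems(2)[of "2*t"] that
        by (simp add: p_def subspace_diff[OF J] subspace_scale[OF J])
    qed
    then have "(2^k - 2^Suc N :: real) *\<^sub>R c k \<in> J"
      using Suc.IH[of "d/2" "\<lambda>k. (2^k - 2^Suc N) *\<^sub>R c k" k] Suc.prems(1) that by simp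
    moreover have "(2::real)^k < 2^Suc N"
      using that by (intro power_strict_increasing) auto
    ultimately show ?thesis
      using subspace_scale[OF J, of _ "inverse (2^k - 2^Suc N)"] by force
  qed
  have "(d/2)^Suc N *\<^sub>R c (Suc N) = p (d/2) - (\<Sum>k\<le>N. (d/2)^k *\<^sub>R c k)"
    by (simp add: p_def)
  also have "\<dots> \<in> J"
  proof (rule subspace_diff[OF J])
    show "p (d/2) \<in> J" using Suc.prems(1) Suc.prems(2)[of "d/2"] by (simp add: p_def)
    show "(\<Sum>k\<le>N. (d/2)^k *\<^sub>R c k) \<in> J"
      using lower by (intro subspace_sum[OF J] subspace_scale[OF J]) simp
  qed
  finally have "inverse ((d/2)^Suc N) *\<^sub>R ((d/2)^Suc N *\<^sub>R c (Suc N)) \<in> J"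
    by (rule subspace_scale[OF J])
  then have "c (Suc N) \<in> J"
    using Suc.prems(1) by simp
  then show ?case using lower Suc.prems(3) le_Suc_eq by blast
qed

text \<open>\<open>hom_part x y n k\<close> is the part of \<open>(x + y)^(n+1)\<close> of degree \<open>k\<close> in \<open>y\<close>.\<close>

fun hom_part :: "'a::real_algebra \<Rightarrow> 'a \<Rightarrow> nat \<Rightarrow> nat \<Rightarrow> 'a" where
  "hom_part x y 0 k = (if k = 0 then x else if k = 1 then y else 0)"
| "hom_part x y (Suc n) k = x * hom_part x y n k + (if k = 0 then 0 else y * hom_part x y n (k - 1))"

lemma hom_part_eq_0: "Suc n < k \<Longrightarrow> hom_part x y n k = 0"
  by (induction n arbitrary: k) auto

lemma hom_part_top: "hom_part x y n (Suc n) = word_prod (replicate (Suc n) y)"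
  by (induction n) (auto simp: hom_part_eq_0)

lemma hom_part_bottom: "hom_part x y n 0 = word_prod (replicate (Suc n) x)"
  by (induction n) auto

lemma word_prod_replicate_add_scaleR:
  "word_prod (replicate (Suc n) (x + t *\<^sub>R y)) = (\<Sum>k\<le>Suc n. t^k *\<^sub>R hom_part x y n k)"
proof (induction n)
  case 0 then show ?case by simp
next
  case (Suc n)
  have "word_prod (replicate (Suc (Suc n)) (x + t *\<^sub>R y))
      = (x + t *\<^sub>R y) * word_prod (replicate (Suc n) (x + t *\<^sub>R y))"
    by simp
  also have "\<dots> = (\<Sum>k\<le>Suc n. t^k *\<^sub>R (x * hom_part x y n k))
      + (\<Sum>k\<le>Suc n. t^(Suc k) *\<^sub>R (y * hom_part x y n k))"
    unfolding Suc distrib_right sum_distrib_left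
    by (simp add: scaleR_scaleR mult.commute sum.distrib)
  also have "(\<Sum>k\<le>Suc n. t^k *\<^sub>R (x * hom_part x y n k)) = (\<Sum>k\<le>Suc (Suc n). t^k *\<^sub>R (x * hom_part x y n k))"
    by (simp add: hom_part_eq_0)
  also have "(\<Sum>k\<le>Suc n. t^(Suc k) *\<^sub>R (y * hom_part x y n k))
      = (\<Sum>k\<le>Suc (Suc n). t^k *\<^sub>R (if k = 0 then 0 else y * hom_part x y n (k - 1)))"
    by (subst sum.atMost_Suc_shift[of _ "Suc n"]) simp
  finally show ?case by (simp add: sum.distrib[symmetric] scaleR_add_right)
qed

definition insertion_sum :: "nat \<Rightarrow> 'a::{times,comm_monoid_add} \<Rightarrow> 'a list \<Rightarrow> 'a" where
  "insertion_sum n x ws = (\<Sum>i\<le>n. word_prod (replicate i x @ ws @ replicate (n - i) x))"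

lemma hom_part_one: "hom_part x y n 1 = insertion_sum n x [y]"
proof (induction n)
  case 0 then show ?case by (simp add: insertion_sum_def)
next
  case (Suc n)
  have "insertion_sum (Suc n) x [y]
      = word_prod (y # replicate (Suc n) x)
        + (\<Sum>i\<le>n. word_prod (x # replicate i x @ [y] @ replicate (n - i) x))"
    unfolding insertion_sum_def by (subst sum.atMost_Suc_shift) simp
  also have "(\<Sum>i\<le>n. word_prod (x # replicate i x @ [y] @ replicate (n - i) x)) = x * insertion_sum n x [y]"
    unfolding insertion_sum_def sum_distrib_left by (intro sum.cong refl) (simp add: word_prod_Cons)
  finally show ?case using Suc by (simp add: hom_part_bottom add.commute)
qed

lemma insertion_sum_in_subspace:
  fixes x :: "'a::real_algebra"
  assumes J: "subspace J" and powers: "\<forall>x. word_prod (replicate (Suc n) x) \<in> J" and "ws \<noteq> []"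
  shows "insertion_sum n x ws \<in> J"
proof -
  have "(\<Sum>k\<le>Suc n. t^k *\<^sub>R hom_part x y n k) \<in> J" for t y
    using powers[rule_format, of "x + t *\<^sub>R y"] by (simp only: word_prod_replicate_add_scaleR)
  then have "hom_part x (word_prod ws) n 1 \<in> J"
    by (intro coeffs_in_subspace[OF J, where c="hom_part x (word_prod ws) n" and d=1 and N="Suc n"]) auto
  moreover have "insertion_sum n x ws = insertion_sum n x [word_prod ws]"
    unfolding insertion_sum_def using word_prod_flatten[OF \<open>ws \<noteq> []\<close>] by simp
  ultimately show ?thesis by (simp only: hom_part_one)
qed

definition alg_ideal :: "'a::real_algebra set \<Rightarrow> bool" where
  "alg_ideal J \<longleftrightarrow> subspace J \<and> (\<forall>x\<in>J. \<forall>a. a * x \<in> J \<and> x * a \<in> J)"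

lemma
  assumes "alg_ideal J"
  shows alg_ideal_subspace: "subspace J"
    and alg_ideal_mult_left: "x \<in> J \<Longrightarrow> a * x \<in> J"
    and alg_ideal_mult_right: "x \<in> J \<Longrightarrow> x * a \<in> J"
  using assms by (auto simp: alg_ideal_def)

lemma alg_ideal_word_prod_infix:
  assumes J: "alg_ideal J" and "l \<noteq> []" "word_prod l \<in> J"
  shows "word_prod (us @ l @ vs) \<in> J"
proof -
  have "word_prod (us @ [word_prod l] @ vs) \<in> J"
    using assms
    by (cases "us = []"; cases "vs = []")
      (simp_all add: word_prod_append word_prod_Cons alg_ideal_mult_left alg_ideal_mult_right)
  then show ?thesis using word_prod_flatten[OF \<open>l \<noteq> []\<close>] by simp
qed

lemma alg_ideal_span:
  assumes "\<And>x a. x \<in> S \<Longrightarrow> a * x \<in> S \<and> x * a \<in> S"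
  shows "alg_ideal (span S)"
proof -
  have "a * p \<in> span S \<and> p * a \<in> span S" if "p \<in> span S" for p a
    using that
  proof (induction rule: span_induct_alt)
    case base then show ?case by (simp add: span_zero)
  next
    case (step c x y)
    then show ?case using assms[of x a]
      by (simp add: distrib_left distrib_right span_add span_scale span_base)
  qed
  then show ?thesis by (simp add: alg_ideal_def)
qed

lemma span_sandwich:
  fixes S :: "'a::real_algebra set"
  assumes J: "subspace J" and S: "\<And>p q a. p \<in> S \<Longrightarrow> q \<in> S \<Longrightarrow> p * a * q \<in> J"
    and "p \<in> span S" "q \<in> span S"
  shows "p * a * q \<in> J"
proof -
  have left: "x * a * q \<in> J" if "x \<in> S" for x
    using \<open>q \<in> span S\<close>
  proof (induction rule: span_induct_alt)
    case base then show ?case by (simp add: subspace_0[OF J])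
  next
    case (step c z w)
    then show ?case using S[OF that step(1)]
      by (simp add: distrib_left subspace_add[OF J] subspace_scale[OF J])
  qed
  show ?thesis
    using \<open>p \<in> span S\<close>
  proof (induction rule: span_induct_alt)
    case base then show ?case by (simp add: subspace_0[OF J])
  next
    case (step c x y)
    then show ?case using left[OF step(1)]
      by (simp add: distrib_right subspace_add[OF J] subspace_scale[OF J])
  qed
qed

lemma in_subspace_of_row_column_sums:
  fixes T :: "nat \<Rightarrow> nat \<Rightarrow> 'a::real_vector"
  assumes sub: "subspace J"
    and column_sums: "\<And>j. j \<le> M \<Longrightarrow> (\<Sum>i\<le>M. T i j) \<in> J"
    and row_sums: "\<And>i. i < M \<Longrightarrow> (\<Sum>j\<le>M. T i j) \<in> J"
    and last_row: "\<And>j. j \<le> M \<Longrightarrow> T M j = K"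
  shows "K \<in> J"
proof -
  have "(\<Sum>i\<le>M. \<Sum>j\<le>M. T i j) = (\<Sum>i<M. \<Sum>j\<le>M. T i j) + real (Suc M) *\<^sub>R K"
    using last_row by (simp add: lessThan_Suc_atMost[symmetric] sum_constant_scaleR algebra_simps)
  moreover have "(\<Sum>i\<le>M. \<Sum>j\<le>M. T i j) = (\<Sum>j\<le>M. \<Sum>i\<le>M. T i j)"
    by (rule sum.swap)
  ultimately have "real (Suc M) *\<^sub>R K = (\<Sum>j\<le>M. \<Sum>i\<le>M. T i j) - (\<Sum>i<M. \<Sum>j\<le>M. T i j)"
    by simp
  also have "\<dots> \<in> J"
    using column_sums row_sums
    by (auto intro: subspace_diff[OF sub] subspace_sum[OF sub])
  finally have "inverse (real (Suc M)) *\<^sub>R (real (Suc M) *\<^sub>R K) \<in> J"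
    by (rule subspace_scale[OF sub])  \<comment> \<open>characteristic 0\<close>
  then show ?thesis by simp
qed

lemma higman_lemma:
  fixes x y z :: "'a::real_algebra"
  assumes J: "alg_ideal J" and powers: "\<forall>x. word_prod (replicate (Suc M) x) \<in> J" and "M \<ge> 1"
  shows "word_prod (replicate M x @ [z] @ replicate M y) \<in> J"
proof -
  have sub: "subspace J" using J by (rule alg_ideal_subspace)
  \<comment> \<open>Columns of \<open>T\<close> are insertion sums of \<open>x\<close>, rows other than the last contain an insertion sum
    of \<open>y\<close>, and the last row is constantly \<open>x^M z y^M\<close>.\<close>
  define T where "T i j = word_prod (replicate i x @ [z] @ replicate j y @ replicate (M - i) x @ replicate (M - j) y)"
    for i j
  define K where "K = word_prod (replicate M x @ [z] @ replicate M y)"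
  have column_sums: "(\<Sum>i\<le>M. T i j) \<in> J" if "j \<le> M" for j
  proof (cases "j = M")
    case True
    then have "(\<Sum>i\<le>M. T i j) = insertion_sum M x ([z] @ replicate M y)"
      unfolding insertion_sum_def T_def by simp
    then show ?thesis using insertion_sum_in_subspace[OF sub powers] by simp
  next
    case False
    then have "replicate (M - j) y \<noteq> []" using that by simp
    then have "T i j = word_prod (replicate i x @ ([z] @ replicate j y) @ replicate (M - i) x)
        * word_prod (replicate (M - j) y)" for i
      unfolding T_def by (simp flip: word_prod_append)
    then have "(\<Sum>i\<le>M. T i j) = insertion_sum M x ([z] @ replicate j y) * word_prod (replicate (M - j) y)"
      unfolding insertion_sum_def sum_distrib_right by simp
    then show ?thesis
      using insertion_sum_in_subspace[OF sub powers] alg_ideal_mult_right[OF J] by simp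
  qed
  have row_sums: "(\<Sum>j\<le>M. T i j) \<in> J" if "i < M" for i
  proof -
    have "T i j = word_prod (replicate i x @ [z])
        * word_prod (replicate j y @ replicate (M - i) x @ replicate (M - j) y)" for j
      unfolding T_def using that by (simp flip: word_prod_append)
    then have "(\<Sum>j\<le>M. T i j) = word_prod (replicate i x @ [z]) * insertion_sum M y (replicate (M - i) x)"
      unfolding insertion_sum_def sum_distrib_left by simp
    then show ?thesis
      using insertion_sum_in_subspace[OF sub powers, of "replicate (M - i) x" y] that
        alg_ideal_mult_left[OF J] by simp
  qed
  have last_row: "T M j = K" if "j \<le> M" for j
  proof -
    have "replicate j y @ replicate (M - j) y = replicate M y"
      using that by (simp flip: replicate_add)
    then show ?thesis unfolding T_def K_def by simp
  qed
  show ?thesis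
    using in_subspace_of_row_column_sums[OF sub column_sums row_sums last_row] by (simp add: K_def)
qed

lemma higman_sandwich:
  fixes x y a :: "'a::real_algebra"
  assumes J: "alg_ideal J" and powers: "\<forall>x. word_prod (replicate (Suc M) x) \<in> J" and "M \<ge> 1"
  shows "word_prod (us @ replicate M x @ vs) * a * word_prod (us' @ replicate M y @ vs') \<in> J"
proof -
  have ne: "replicate M z \<noteq> []" for z :: 'a using \<open>M \<ge> 1\<close> by simp
  define l where "l = replicate M x @ (vs @ [a] @ us') @ replicate M y"
  have "word_prod (us @ replicate M x @ vs) * a * word_prod (us' @ replicate M y @ vs')
      = word_prod ((us @ replicate M x @ vs) @ [a] @ (us' @ replicate M y @ vs'))"
    using ne by (simp add: word_prod_append word_prod_Cons mult.assoc del: append_assoc)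
  also have "\<dots> = word_prod (us @ l @ vs')" unfolding l_def by simp
  finally have eq: "word_prod (us @ replicate M x @ vs) * a * word_prod (us' @ replicate M y @ vs')
      = word_prod (us @ l @ vs')" .
  have "word_prod l = word_prod (replicate M x @ [word_prod (vs @ [a] @ us')] @ replicate M y)"
    unfolding l_def by (rule word_prod_flatten) simp
  then have "word_prod l \<in> J" using higman_lemma[OF J powers \<open>M \<ge> 1\<close>] by simp
  moreover have "l \<noteq> []" using ne by (simp add: l_def)
  ultimately show ?thesis
    unfolding eq using alg_ideal_word_prod_infix[OF J] by blast
qed

lemma nagata_higman_step:
  fixes J :: "'a::real_algebra set"
  assumes J: "alg_ideal J" and powers: "\<forall>x. word_prod (replicate (Suc M) x) \<in> J" and "M \<ge> 1"
  obtains I where "alg_ideal I" "\<forall>x. word_prod (replicate M x) \<in> I"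
    "\<And>p q a. p \<in> I \<Longrightarrow> q \<in> I \<Longrightarrow> p * a * q \<in> J"
proof -
  define G where "G = {word_prod (us @ replicate M (x::'a) @ vs) | us vs x. True}"
  have ne: "replicate M x \<noteq> []" for x :: 'a using \<open>M \<ge> 1\<close> by simp
  have G_mult: "g * a \<in> G \<and> a * g \<in> G" if "g \<in> G" for g a
  proof -
    obtain us vs x where g: "g = word_prod (us @ replicate M x @ vs)"
      using \<open>g \<in> G\<close> unfolding G_def by auto
    have "g * a = word_prod (us @ replicate M x @ (vs @ [a]))"
      using word_prod_append[of "us @ replicate M x @ vs" "[a]"] ne by (simp add: g)
    moreover have "a * g = word_prod ((a # us) @ replicate M x @ vs)"
      using ne by (simp add: g word_prod_Cons)
    ultimately show ?thesis unfolding G_def by blast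
  qed
  have G_sandwich: "g * a * h \<in> J" if "g \<in> G" "h \<in> G" for g h a
    using that higman_sandwich[OF J powers \<open>M \<ge> 1\<close>] unfolding G_def by blast
  show thesis
  proof
    show "alg_ideal (span (J \<union> G))"
      using G_mult alg_ideal_mult_left[OF J] alg_ideal_mult_right[OF J]
      by (intro alg_ideal_span) blast
    show "\<forall>x. word_prod (replicate M x) \<in> span (J \<union> G)"
    proof
      fix x
      have "word_prod ([] @ replicate M x @ []) \<in> G" unfolding G_def by blast
      then show "word_prod (replicate M x) \<in> span (J \<union> G)" by (simp add: span_base)
    qed
    have "p * a * q \<in> J" if "p \<in> J \<union> G" "q \<in> J \<union> G" for p q a
      using that G_sandwich alg_ideal_mult_left[OF J] alg_ideal_mult_right[OF J] by blast
    then show "p * a * q \<in> J" if "p \<in> span (J \<union> G)" "q \<in> span (J \<union> G)" for p q a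
      using span_sandwich[OF alg_ideal_subspace[OF J] _ that] by blast
  qed
qed

fun nagata_higman_bound :: "nat \<Rightarrow> nat" where
  "nagata_higman_bound 0 = 1"
| "nagata_higman_bound (Suc m) = 2 * nagata_higman_bound m + 1"

lemma nagata_higman_bound_pos: "nagata_higman_bound m \<ge> 1"
  by (induction m) auto

lemma word_prod_in_ideal_of_powers:
  fixes J :: "'a::real_algebra set"
  assumes "alg_ideal J" "\<forall>x. word_prod (replicate (Suc m) x) \<in> J" "length l = nagata_higman_bound m"
  shows "word_prod l \<in> J"
  using assms
proof (induction m arbitrary: J l)
  case 0
  then obtain x where "l = [x]" by (cases l) auto
  then show ?case using "0.prems"(2) by simp
next
  case (Suc m)
  obtain I where I: "alg_ideal I" "\<forall>x. word_prod (replicate (Suc m) x) \<in> I"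
    and sandwich: "\<And>p q a. p \<in> I \<Longrightarrow> q \<in> I \<Longrightarrow> p * a * q \<in> J"
    using nagata_higman_step[OF Suc.prems(1,2)] by auto
  define n where "n = nagata_higman_bound m"
  have n: "n \<ge> 1" "length l = 2 * n + 1"
    using nagata_higman_bound_pos Suc.prems(3) by (auto simp: n_def)
  define l1 l2 where "l1 = take n l" and "l2 = drop (Suc n) l"
  have l: "l = l1 @ [l ! n] @ l2"
    unfolding l1_def l2_def using n by (simp add: id_take_nth_drop)
  have len: "length l1 = n" "length l2 = n" using n by (auto simp: l1_def l2_def)
  then have "l1 \<noteq> []" "l2 \<noteq> []" using n by auto
  then have "word_prod l = word_prod l1 * l ! n * word_prod l2"
    by (subst l) (simp add: word_prod_append word_prod_Cons mult.assoc)
  moreover have "word_prod l1 \<in> I" "word_prod l2 \<in> I"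
    using Suc.IH[OF I] len by (auto simp: n_def)
  ultimately show ?case using sandwich by simp
qed

theorem nagata_higman:
  fixes l :: "'a::real_algebra list"
  assumes "\<forall>x::'a. word_prod (replicate (Suc m) x) = 0" "length l = nagata_higman_bound m"
  shows "word_prod l = 0"
  using word_prod_in_ideal_of_powers[of "{0}" m l] assms by (simp add: alg_ideal_def)

lemma continuous_on_word_prod_replicate:
  "continuous_on UNIV (\<lambda>x::'a::real_normed_algebra. word_prod (replicate (Suc n) x))"
proof (induction n)
  case 0 then show ?case by (simp add: continuous_on_id)
next
  case (Suc n)
  then show ?case by (simp add: continuous_on_mult continuous_on_id)
qed

lemma word_prod_replicate_eq_0_if_ball:
  fixes x0 y :: "'a::real_normed_algebra"
  assumes "r > 0" and ball: "\<And>x. x \<in> ball x0 r \<Longrightarrow> word_prod (replicate (Suc k) x) = 0"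
  shows "word_prod (replicate (Suc k) y) = 0"
proof -
  define d where "d = r / (norm y + 1)"
  have "d > 0" using \<open>r > 0\<close> by (simp add: d_def add_nonneg_pos)
  have "(\<Sum>j\<le>Suc k. t^j *\<^sub>R hom_part x0 y k j) \<in> {0}" if "0 < t" "t < d" for t
  proof -
    have "norm (t *\<^sub>R y) \<le> t * (norm y + 1)" using that by simp
    also have "\<dots> < r" using that by (simp add: d_def pos_less_divide_eq add_nonneg_pos)
    finally have "x0 + t *\<^sub>R y \<in> ball x0 r" by (simp add: dist_norm)
    then show ?thesis using ball word_prod_replicate_add_scaleR[of k x0 t y] by simp
  qed
  then have "hom_part x0 y k (Suc k) \<in> {0}"
    by (intro coeffs_in_subspace[OF subspace_single_0 \<open>d > 0\<close>, where c="hom_part x0 y k"]) auto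
  then show ?thesis by (simp add: hom_part_top)
qed

lemma nil_banach_algebra_bounded_index:
  assumes "nil_alg (UNIV :: 'a::{real_normed_algebra,banach} set)"
  obtains k where "\<And>x::'a. word_prod (replicate (Suc k) x) = 0"
proof -
  define S where "S k = {x::'a. word_prod (replicate (Suc k) x) = 0}" for k
  have closed: "closed (S k)" for k
    unfolding S_def using continuous_on_word_prod_replicate
    by (intro closed_Collect_eq) (auto intro: continuous_intros)
  have cover: "\<Union>(range S) = UNIV"
  proof safe
    fix x :: 'a
    obtain n where "n \<ge> 1" "mprod (\<lambda>_. x) (replicate n 0) = 0"
      using assms unfolding nil_alg_def by blast
    then have "x \<in> S (n - 1)" by (cases n) (auto simp: S_def mprod_eq_word_prod)
    then show "x \<in> \<Union>(range S)" by blast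
  qed simp
  have "\<exists>k. interior (S k) \<noteq> {}"
  proof (rule ccontr)
    assume "\<nexists>k. interior (S k) \<noteq> {}"
    then have "euclidean interior_of \<Union>(range S) = {}"
      by (intro Baire_category_alt) (auto simp: completely_metrizable_space_euclidean closed)
    then show False using cover by simp
  qed
  then obtain k x0 r where "r > 0" "ball x0 r \<subseteq> S k"
    by (metis ex_in_conv mem_interior)
  then show thesis
    using word_prod_replicate_eq_0_if_ball[of r x0 k] that unfolding S_def by blast
qed

theorem nil_banach_algebra_nilpotent:
  assumes "nil_alg (UNIV :: 'a::{real_normed_algebra,banach} set)"
  shows "nilpotent_alg (A :: 'a set)"
proof -
  obtain k where "\<And>x::'a. word_prod (replicate (Suc k) x) = 0"
    using nil_banach_algebra_bounded_index[OF assms] by blast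
  then have "word_prod l = 0" if "length l = nagata_higman_bound k" for l :: "'a list"
    using nagata_higman that by blast
  then show ?thesis
    using nagata_higman_bound_pos[of k] unfolding nilpotent_alg_def by (auto simp: mprod_eq_word_prod)
qed

theorem corollary1p5:
  fixes dummyR :: "'a::{real_normed_algebra, banach}"
    and dummyC :: "'b::{real_normed_algebra, banach}"
  shows "(\<forall>A :: 'a set. subalg scaleR A \<and> closure A = UNIV \<and> is_PI (scaleR :: real \<Rightarrow> 'a \<Rightarrow> 'a) A
            \<and> nil_alg (UNIV :: 'a set) \<longrightarrow> nilpotent_alg A)
       \<and> (\<forall>(sc :: complex \<Rightarrow> 'b \<Rightarrow> 'b) (A :: 'b set). complex_scale sc \<and> subalg sc A \<and> closure A = UNIV
            \<and> is_PI sc A \<and> nil_alg (UNIV :: 'b set) \<longrightarrow> nilpotent_alg A)"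
  using nil_banach_algebra_nilpotent[where 'a='a] nil_banach_algebra_nilpotent[where 'a='b] by blast

end
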